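(* Fix $M<\infty$, $\kappa\in(0,1/2)$, and let $\mathcal{G}_1,\mathcal{G}_2,\dots$ be a (finite or countable) sequence of classes of allocations. Suppose the penalties satisfy: there exist positive constants $c_0,c_1$ such that for all $n,k$ and $\epsilon>0$, $\sup_{P\in\mathcal{P}(M,\kappa)}P^n\big(W_n(\hat G_{n,k})-W(\hat G_{n,k})-C_n(k)>\epsilon\big)\le c_1e^{-2c_0n\epsilon^2}$. Then there exists a positive constant $\Delta$, not depending on $n$, such that for every $n$, every $P\in\mathcal{P}(M,\kappa)$ and every $\epsilon>0$, $$P^n\big(R_n(\hat G_n)-W(\hat G_n)>\epsilon\big)\le\Delta e^{-2c_0n\epsilon^2},$$ where $R_n(\hat G_n):=\max_kR_{n,k}(\hat G_{n,k})$.
   Context: $P$ is the distribution of $(Y,D,X)$ with $Y\in\mathbb{R}$, $D\in\{0,1\}$, $X\in\mathcal{X}\subseteq\mathbb{R}^{d_x}$; data i.i.d. from $P$. $e(x)=E_P[D\mid X=x]$ (known). $\mathcal{P}(M,\kappa)$: distributions with support of $Y$ in $[-M/2,M/2]$ and $e(x)\in[\kappa,1-\kappa]$ for all $x$. Welfare $W(G)=E_P[(\frac{YD}{e(X)}-\frac{Y(1-D)}{1-e(X)})\mathbf{1}\{X\in G\}]$. $\tau_i=\frac{Y_iD_i}{e(X_i)}-\frac{Y_i(1-D_i)}{1-e(X_i)}$, $W_n(G)=\frac1n\sum_i\tau_i\mathbf{1}\{X_i\in G\}$, $\hat G_{n,k}\in\arg\max_{G\in\mathcal{G}_k}W_n(G)$.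 With data-dependent penalties $C_n(k)$, $R_{n,k}(G)=W_n(G)-C_n(k)-\sqrt{k/n}$; the PWM rule is $\hat G_n=\hat G_{n,\hat k}$ with $\hat k\in\arg\max_kR_{n,k}(\hat G_{n,k})$. Maximizers assumed to exist. *)

theory Defs
  imports "HOL-Probability.Probability"
begin

definition obsY :: "real \<times> real \<times> 'x \<Rightarrow> real" where "obsY z = fst z"
definition obsD :: "real \<times> real \<times> 'x \<Rightarrow> real" where "obsD z = fst (snd z)"
definition obsX :: "real \<times> real \<times> 'x \<Rightarrow> 'x" where "obsX z = snd (snd z)"

text \<open>IPW score tau_i, using the known propensity score e.\<close>
definition tau :: "('x \<Rightarrow> real) \<Rightarrow> real \<times> real \<times> 'x \<Rightarrow> real" where
  "tau e z = obsY z * obsD z / e (obsX z) - obsY z * (1 - obsD z) / (1 - e (obsX z))"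

definition Wpop :: "(real \<times> real \<times> 'x) measure \<Rightarrow> ('x \<Rightarrow> real) \<Rightarrow> 'x set \<Rightarrow> real" where
  "Wpop P e G = (\<integral>z. tau e z * indicator G (obsX z) \<partial>P)"

definition Wemp :: "('x \<Rightarrow> real) \<Rightarrow> nat \<Rightarrow> (nat \<Rightarrow> real \<times> real \<times> 'x) \<Rightarrow> 'x set \<Rightarrow> real" where
  "Wemp e n \<omega> G = (\<Sum>i<n. tau e (\<omega> i) * indicator G (obsX (\<omega> i))) / real n"

definition sampleM :: "nat \<Rightarrow> 'a measure \<Rightarrow> (nat \<Rightarrow> 'a) measure" where
  "sampleM n P = PiM {..<n} (\<lambda>_. P)"

text \<open>e is the propensity score of P, i.e. e(X) = E_P[D | X] (as a version of the
  conditional expectation given X, a measurable function of X).\<close>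
definition is_propensity :: "(real \<times> real \<times> 'x::euclidean_space) measure \<Rightarrow> ('x \<Rightarrow> real) \<Rightarrow> bool" where
  "is_propensity P e \<longleftrightarrow> e \<in> borel_measurable borel \<and>
     (\<forall>A \<in> sets (borel :: 'x measure).
        (\<integral>z. obsD z * indicator A (obsX z) \<partial>P) = (\<integral>z. e (obsX z) * indicator A (obsX z) \<partial>P))"

text \<open>The class P(M, kappa), as pairs (P, e) of a distribution and its (known) propensity score.\<close>
definition PMk :: "real \<Rightarrow> real \<Rightarrow> ((real \<times> real \<times> 'x::euclidean_space) measure \<times> ('x \<Rightarrow> real)) set" where
  "PMk M \<kappa> = {(P, e). prob_space P \<and> sets P = sets borel \<and>
      (AE z in P. obsY z \<in> {-M/2..M/2}) \<and> (AE z in P. obsD z \<in> {0, 1}) \<and>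
      is_propensity P e \<and> (\<forall>x. \<kappa> \<le> e x \<and> e x \<le> 1 - \<kappa>)}"

definition Rnk :: "(('x \<Rightarrow> real) \<Rightarrow> nat \<Rightarrow> nat \<Rightarrow> (nat \<Rightarrow> real \<times> real \<times> 'x) \<Rightarrow> 'x set)
    \<Rightarrow> (('x \<Rightarrow> real) \<Rightarrow> nat \<Rightarrow> nat \<Rightarrow> (nat \<Rightarrow> real \<times> real \<times> 'x) \<Rightarrow> real)
    \<Rightarrow> ('x \<Rightarrow> real) \<Rightarrow> nat \<Rightarrow> nat \<Rightarrow> (nat \<Rightarrow> real \<times> real \<times> 'x) \<Rightarrow> real" where
  "Rnk Ghat C e n k \<omega> = Wemp e n \<omega> (Ghat e n k \<omega>) - C e n k \<omega> - sqrt (real k / real n)"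

end

theory Submission
  imports Defs
begin

text \<open>If the penalised criterion of the selected class \<open>k\<close> exceeds its welfare by \<open>\<epsilon>\<close>, then
  \<open>W_n - W - C_n(k) > \<epsilon> + sqrt(k/n)\<close> for that class. A union bound over \<open>k\<close>, together with
  \<open>n (\<epsilon> + sqrt(k/n))^2 \<ge> n \<epsilon>^2 + k\<close>, turns the penalty tail bounds into
  \<open>c1 exp(-2 c0 n \<epsilon>^2)\<close> times the geometric series \<open>\<Sum>k. exp(-2 c0)^k\<close>.\<close>

lemma (in finite_measure) measure_le_suminf_of_cover:
  assumes A: "range A \<subseteq> sets M" and cover: "E \<subseteq> (\<Union>k. A k)"
    and bound: "\<And>k. measure M (A k) \<le> b k" and b: "summable b"
  shows "measure M E \<le> (\<Sum>k. b k)"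
proof -
  have sA: "summable (\<lambda>k. measure M (A k))"
    by (rule summable_comparison_test'[OF b]) (use bound in simp)
  have "measure M E \<le> measure M (\<Union>k. A k)"
  proof (cases "E \<in> sets M")
    case True
    then show ?thesis using cover A by (intro finite_measure_mono) auto
  next
    case False
    then show ?thesis by (simp add: measure_notin_sets)
  qed
  also have "\<dots> \<le> (\<Sum>k. measure M (A k))"
    by (rule finite_measure_subadditive_countably[OF A sA])
  also have "\<dots> \<le> (\<Sum>k. b k)"
    by (rule suminf_le[OF bound sA b])
  finally show ?thesis .
qed

lemma (in finite_measure) measure_le_geometric_of_cover:
  fixes K :: "nat set" and B q :: real
  assumes A: "A ` K \<subseteq> sets M" and cover: "E \<subseteq> (\<Union>k\<in>K. A k)"
    and bound: "\<And>k. k \<in> K \<Longrightarrow> measure M (A k) \<le> B * q ^ k"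
    and "0 \<le> B" "0 \<le> q" "q < 1"
  shows "measure M E \<le> B / (1 - q)"
proof -
  define A' where "A' k = (if k \<in> K then A k else {})" for k
  have "measure M E \<le> (\<Sum>k. B * q ^ k)"
  proof (rule measure_le_suminf_of_cover)
    show "range A' \<subseteq> sets M" and "E \<subseteq> (\<Union>k. A' k)"
      using A cover by (auto simp: A'_def)
    show "measure M (A' k) \<le> B * q ^ k" for k
      using bound assms(4,5) by (simp add: A'_def)
    show "summable (\<lambda>k. B * q ^ k)"
      using assms(5,6) by (intro summable_mult summable_geometric) simp
  qed
  also have "\<dots> = B / (1 - q)"
    using assms(5,6) by (simp add: suminf_mult suminf_geometric)
  finally show ?thesis .
qed

lemma exp_shifted_square_le:
  fixes c \<epsilon> :: real and n k :: nat
  assumes "0 \<le> c" "0 \<le> \<epsilon>" "0 < n"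
  shows "exp (- 2 * c * real n * (\<epsilon> + sqrt (real k / real n))\<^sup>2)
    \<le> exp (- 2 * c * real n * \<epsilon>\<^sup>2) * exp (- 2 * c) ^ k"
proof -
  define s where "s = sqrt (real k / real n)"
  have "real n * s\<^sup>2 = real k"
    using assms(3) by (simp add: s_def)
  moreover have "\<epsilon>\<^sup>2 + s\<^sup>2 \<le> (\<epsilon> + s)\<^sup>2"
    using assms(2) by (simp add: s_def power2_eq_square algebra_simps)
  ultimately have "real n * \<epsilon>\<^sup>2 + real k \<le> real n * (\<epsilon> + s)\<^sup>2"
    by (metis distrib_left mult_left_mono of_nat_0_le_iff)
  then have "2 * c * (real n * \<epsilon>\<^sup>2 + real k) \<le> 2 * c * (real n * (\<epsilon> + s)\<^sup>2)"
    using assms(1) by (intro mult_left_mono) auto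
  then have "- 2 * c * real n * (\<epsilon> + s)\<^sup>2 \<le> - 2 * c * real n * \<epsilon>\<^sup>2 + real k * (- 2 * c)"
    by (simp add: algebra_simps)
  then show ?thesis
    unfolding s_def exp_of_nat_mult[symmetric] exp_add[symmetric] by simp
qed

lemma Rnk_minus_gt_iff:
  "\<epsilon> < Rnk Ghat C e n k \<omega> - w \<longleftrightarrow>
    \<epsilon> + sqrt (real k / real n) < Wemp e n \<omega> (Ghat e n k \<omega>) - w - C e n k \<omega>"
  unfolding Rnk_def by linarith

theorem lemmaA2:
  fixes M \<kappa> c0 c1 :: real
    and K :: "nat set"
    and G :: "nat \<Rightarrow> 'x::euclidean_space set set"
    and Ghat :: "('x \<Rightarrow> real) \<Rightarrow> nat \<Rightarrow> nat \<Rightarrow> (nat \<Rightarrow> real \<times> real \<times> 'x) \<Rightarrow> 'x set"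
    and C :: "('x \<Rightarrow> real) \<Rightarrow> nat \<Rightarrow> nat \<Rightarrow> (nat \<Rightarrow> real \<times> real \<times> 'x) \<Rightarrow> real"
    and khat :: "('x \<Rightarrow> real) \<Rightarrow> nat \<Rightarrow> (nat \<Rightarrow> real \<times> real \<times> 'x) \<Rightarrow> nat"
  assumes M_pos: "0 < M"
    and kappa: "0 < \<kappa>" "\<kappa> < 1/2"
    and K_index: "K \<subseteq> {1..}"
    and G_meas: "\<And>k. k \<in> K \<Longrightarrow> G k \<subseteq> sets (borel :: 'x measure)"
    and Ghat_max: "\<And>e n k \<omega>. k \<in> K \<Longrightarrow>
        Ghat e n k \<omega> \<in> G k \<and> (\<forall>G' \<in> G k. Wemp e n \<omega> G' \<le> Wemp e n \<omega> (Ghat e n k \<omega>))"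
    and khat_max: "\<And>e n \<omega>. 1 \<le> n \<Longrightarrow> khat e n \<omega> \<in> K \<and>
        (\<forall>k \<in> K. Rnk Ghat C e n k \<omega> \<le> Rnk Ghat C e n (khat e n \<omega>) \<omega>)"
    and meas_khat: "\<And>P e n. (P, e) \<in> PMk M \<kappa> \<Longrightarrow> 1 \<le> n \<Longrightarrow>
        khat e n \<in> measurable (sampleM n P) (count_space UNIV)"
    and meas_Wemp: "\<And>P e n k. (P, e) \<in> PMk M \<kappa> \<Longrightarrow> 1 \<le> n \<Longrightarrow> k \<in> K \<Longrightarrow>
        (\<lambda>\<omega>. Wemp e n \<omega> (Ghat e n k \<omega>)) \<in> borel_measurable (sampleM n P)"
    and meas_Wpop: "\<And>P e n k. (P, e) \<in> PMk M \<kappa> \<Longrightarrow> 1 \<le> n \<Longrightarrow> k \<in> K \<Longrightarrow>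
        (\<lambda>\<omega>. Wpop P e (Ghat e n k \<omega>)) \<in> borel_measurable (sampleM n P)"
    and meas_C: "\<And>P e n k. (P, e) \<in> PMk M \<kappa> \<Longrightarrow> 1 \<le> n \<Longrightarrow> k \<in> K \<Longrightarrow>
        C e n k \<in> borel_measurable (sampleM n P)"
    and c_pos: "0 < c0" "0 < c1"
    and penalty: "\<And>P e n k \<epsilon>. (P, e) \<in> PMk M \<kappa> \<Longrightarrow> 1 \<le> n \<Longrightarrow> k \<in> K \<Longrightarrow> 0 < \<epsilon> \<Longrightarrow>
        measure (sampleM n P)
          {\<omega> \<in> space (sampleM n P).
             Wemp e n \<omega> (Ghat e n k \<omega>) - Wpop P e (Ghat e n k \<omega>) - C e n k \<omega> > \<epsilon>}
        \<le> c1 * exp (- 2 * c0 * real n * \<epsilon>\<^sup>2)"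
  shows "\<exists>\<Delta> > 0. \<forall>P e n \<epsilon>. (P, e) \<in> PMk M \<kappa> \<longrightarrow> 1 \<le> n \<longrightarrow> 0 < \<epsilon> \<longrightarrow>
        measure (sampleM n P)
          {\<omega> \<in> space (sampleM n P).
             Rnk Ghat C e n (khat e n \<omega>) \<omega> - Wpop P e (Ghat e n (khat e n \<omega>) \<omega>) > \<epsilon>}
        \<le> \<Delta> * exp (- 2 * c0 * real n * \<epsilon>\<^sup>2)"
proof -
  define q where "q = exp (- 2 * c0)"
  have q: "0 < q" "q < 1"
    using c_pos by (auto simp: q_def)
  have "measure (sampleM n P)
          {\<omega> \<in> space (sampleM n P).
             Rnk Ghat C e n (khat e n \<omega>) \<omega> - Wpop P e (Ghat e n (khat e n \<omega>) \<omega>) > \<epsilon>}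
        \<le> c1 / (1 - q) * exp (- 2 * c0 * real n * \<epsilon>\<^sup>2)"
    if Pe: "(P, e) \<in> PMk M \<kappa>" and n: "1 \<le> n" and \<epsilon>: "0 < \<epsilon>" for P e n \<epsilon>
  proof -
    let ?S = "sampleM n P"
    define A where "A k = {\<omega> \<in> space ?S. \<epsilon> + sqrt (real k / real n) <
       Wemp e n \<omega> (Ghat e n k \<omega>) - Wpop P e (Ghat e n k \<omega>) - C e n k \<omega>}" for k
    interpret S: prob_space ?S
      using Pe unfolding sampleM_def PMk_def by (auto intro: prob_space_PiM)
    have "measure ?S {\<omega> \<in> space ?S. Rnk Ghat C e n (khat e n \<omega>) \<omega>
        - Wpop P e (Ghat e n (khat e n \<omega>) \<omega>) > \<epsilon>} \<le> c1 * exp (- 2 * c0 * real n * \<epsilon>\<^sup>2) / (1 - q)"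
    proof (rule S.measure_le_geometric_of_cover)
      show "A ` K \<subseteq> sets ?S"
        using meas_Wemp[OF Pe n] meas_Wpop[OF Pe n] meas_C[OF Pe n] unfolding A_def by auto
      show "{\<omega> \<in> space ?S. Rnk Ghat C e n (khat e n \<omega>) \<omega>
          - Wpop P e (Ghat e n (khat e n \<omega>) \<omega>) > \<epsilon>} \<subseteq> (\<Union>k\<in>K. A k)"
        using khat_max[OF n] by (force simp: A_def Rnk_minus_gt_iff)
      show "measure ?S (A k) \<le> c1 * exp (- 2 * c0 * real n * \<epsilon>\<^sup>2) * q ^ k" if "k \<in> K" for k
      proof -
        have "measure ?S (A k) \<le> c1 * exp (- 2 * c0 * real n * (\<epsilon> + sqrt (real k / real n))\<^sup>2)"
          using penalty[OF Pe n that, of "\<epsilon> + sqrt (real k / real n)"] \<epsilon>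
          by (simp add: A_def add_pos_nonneg)
        also have "\<dots> \<le> c1 * exp (- 2 * c0 * real n * \<epsilon>\<^sup>2) * q ^ k"
          using exp_shifted_square_le[of c0 \<epsilon> n k] c_pos \<epsilon> n
          unfolding q_def by (simp add: mult_left_mono)
        finally show ?thesis .
      qed
    qed (use q c_pos in auto)
    then show ?thesis
      by simp
  qed
  moreover have "c1 / (1 - q) > 0"
    using q c_pos by simp
  ultimately show ?thesis
    by blast
qed

end
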